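(* If $\mathcal{F}$ is a strong regular facets-pairing structure on $\mathcal{C}^n$, then for every proper face $f$ of $\mathcal{C}^n$ the number of faces in the face family $\widehat f$ is a power of $2$.
   Context: Let $[\pm n]=\{\pm1,\dots,\pm n\}$ and $\mathcal{C}^n=\{x\in\mathbb{R}^n: -\tfrac14\le x_i\le\tfrac14\}$. For $1\le i\le n$, $\mathbf{F}(i)$ and $\mathbf{F}(-i)$ denote the facets of $\mathcal{C}^n$ in $\{x_i=\tfrac14\}$ and $\{x_i=-\tfrac14\}$; for $j_1,\dots,j_s\in[\pm n]$ with distinct absolute values, $\mathbf{F}(j_1,\dots,j_s)=\bigcap_i\mathbf{F}(j_i)$ (every proper face has this form). A signed permutation is a bijection $\sigma$ of $[\pm n]$ with $\sigma(-k)=-\sigma(k)$. A facets-pairing structure on $\mathcal{C}^n$ is a pair $(\omega,\{\tau_j\})$ where $\omega$ is a bijection of $[\pm n]$ with $\omega\circ\omega=\mathrm{id}$ and $\tau_j:\mathbf{F}(j)\to\mathbf{F}(\omega(j))$ are face-preserving homeomorphisms with $\tau_{\omega(j)}=\tau_j^{-1}$, such that for all $|j|\ne|k|$, writing $\tau_j(\mathbf{F}(j,k))=\mathbf{F}(\omega(j),k')$ and $\tau_k(\mathbf{F}(j,k))=\mathbf{F}(j',\omega(k))$, one has $\tau_{k'}\tau_j(p)=\tau_{j'}\tau_k(p)$ for all $p\in\mathbf{F}(j,k)$. It is regular if each $\tau_j$ is a Euclidean isometry and $\omega$ is a signed permutation. A composition $\tau_{k_m}\circ\dots\circ\tau_{k_1}$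 applied to a proper face $f$ is valid if $f\subset\mathbf{F}(k_1)$ and $\tau_{k_i}\circ\dots\circ\tau_{k_1}(f)\subset\mathbf{F}(k_{i+1})$ for $1\le i<m$ ($m=0$ allowed). The face family $\widehat f$ is the set of faces $\tau_{k_m}\circ\dots\circ\tau_{k_1}(f)$ over all valid compositions. For a proper face $f$ let $\Xi(f)$ be the set of facets containing $f$. If $f\subset\mathbf{F}(k)$ and $f'=\tau_k(f)$, define $\Psi^f_k:\Xi(f)\to\Xi(f')$ by $\Psi^f_k(\mathbf{F}(k))=\mathbf{F}(\omega(k))$ and, for $F'\in\Xi(f)\setminus\{\mathbf{F}(k)\}$, $\Psi^f_k(F')$ is the facet $G$ with $G\cap\mathbf{F}(\omega(k))=\tau_k(F'\cap\mathbf{F}(k))$. $\mathcal{F}$ is strong if for every proper face $f$ and any two valid compositions mapping $f$ onto the same face $\widetilde f$: (a) they agree at every point of $f$; and (b) the corresponding composites of the maps $\Psi$ along the two compositions coincide as maps $\Xi(f)\to\Xi(\widetilde f)$. *)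

theory Defs
  imports "HOL-Analysis.Analysis"
begin

text \<open>Points of R^n are represented as functions nat => real whose coordinates
  1..n are the Euclidean coordinates and all other coordinates are 0.
  Signed indices [+-n] are the integers j with j \<noteq> 0 and |j| \<le> n.\<close>

definition pm :: "nat \<Rightarrow> int set" where
  "pm n = {j. j \<noteq> 0 \<and> \<bar>j\<bar> \<le> int n}"

definition cube :: "nat \<Rightarrow> (nat \<Rightarrow> real) set" where
  "cube n = {x. (\<forall>i\<in>{1..n}. -1/4 \<le> x i \<and> x i \<le> 1/4) \<and> (\<forall>i. i \<notin> {1..n} \<longrightarrow> x i = 0)}"

definition facet :: "nat \<Rightarrow> int \<Rightarrow> (nat \<Rightarrow> real) set" where
  "facet n j = (if j \<in> pm n then {x \<in> cube n. x (nat \<bar>j\<bar>) = of_int (sgn j) / 4} else {})"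

definition face :: "nat \<Rightarrow> int set \<Rightarrow> (nat \<Rightarrow> real) set" where
  "face n S = (\<Inter>j\<in>S. facet n j)"

definition admissible :: "nat \<Rightarrow> int set \<Rightarrow> bool" where
  "admissible n S \<longleftrightarrow> S \<subseteq> pm n \<and> S \<noteq> {} \<and> (\<forall>j\<in>S. - j \<notin> S)"

definition proper_faces :: "nat \<Rightarrow> (nat \<Rightarrow> real) set set" where
  "proper_faces n = {face n S | S. admissible n S}"

definition edist :: "nat \<Rightarrow> (nat \<Rightarrow> real) \<Rightarrow> (nat \<Rightarrow> real) \<Rightarrow> real" where
  "edist n x y = sqrt (\<Sum>i\<in>{1..n}. (x i - y i)\<^sup>2)"

definition facets_pairing :: "nat \<Rightarrow> (int \<Rightarrow> int) \<Rightarrow> (int \<Rightarrow> (nat \<Rightarrow> real) \<Rightarrow> (nat \<Rightarrow> real)) \<Rightarrow> bool" where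
  "facets_pairing n \<omega> \<tau> \<longleftrightarrow>
     bij_betw \<omega> (pm n) (pm n) \<and> (\<forall>j\<in>pm n. \<omega> (\<omega> j) = j) \<and>
     (\<forall>j\<in>pm n. homeomorphism (facet n j) (facet n (\<omega> j)) (\<tau> j) (\<tau> (\<omega> j))) \<and>
     (\<forall>j\<in>pm n. \<forall>f\<in>proper_faces n. f \<subseteq> facet n j \<longrightarrow>
         \<tau> j ` f \<in> proper_faces n \<and> \<tau> j ` f \<subseteq> facet n (\<omega> j)) \<and>
     (\<forall>j\<in>pm n. \<forall>k\<in>pm n. \<forall>k'\<in>pm n. \<forall>j'\<in>pm n.
         \<bar>j\<bar> \<noteq> \<bar>k\<bar> \<and> \<bar>k'\<bar> \<noteq> \<bar>\<omega> j\<bar> \<and> \<bar>j'\<bar> \<noteq> \<bar>\<omega> k\<bar> \<and>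
         \<tau> j ` face n {j, k} = face n {\<omega> j, k'} \<and>
         \<tau> k ` face n {j, k} = face n {j', \<omega> k} \<longrightarrow>
         (\<forall>p\<in>face n {j, k}. \<tau> k' (\<tau> j p) = \<tau> j' (\<tau> k p)))"

definition regular :: "nat \<Rightarrow> (int \<Rightarrow> int) \<Rightarrow> (int \<Rightarrow> (nat \<Rightarrow> real) \<Rightarrow> (nat \<Rightarrow> real)) \<Rightarrow> bool" where
  "regular n \<omega> \<tau> \<longleftrightarrow>
     (\<forall>j\<in>pm n. \<forall>x\<in>facet n j. \<forall>y\<in>facet n j. edist n (\<tau> j x) (\<tau> j y) = edist n x y) \<and>
     (\<forall>k\<in>pm n. \<omega> (- k) = - \<omega> k)"

fun comp_tau :: "(int \<Rightarrow> (nat \<Rightarrow> real) \<Rightarrow> (nat \<Rightarrow> real)) \<Rightarrow> int list \<Rightarrow> (nat \<Rightarrow> real) \<Rightarrow> (nat \<Rightarrow> real)" where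
  "comp_tau \<tau> [] p = p"
| "comp_tau \<tau> (k # ks) p = comp_tau \<tau> ks (\<tau> k p)"

fun valid :: "nat \<Rightarrow> (int \<Rightarrow> (nat \<Rightarrow> real) \<Rightarrow> (nat \<Rightarrow> real)) \<Rightarrow> (nat \<Rightarrow> real) set \<Rightarrow> int list \<Rightarrow> bool" where
  "valid n \<tau> f [] = True"
| "valid n \<tau> f (k # ks) = (k \<in> pm n \<and> f \<subseteq> facet n k \<and> valid n \<tau> (\<tau> k ` f) ks)"

definition face_family :: "nat \<Rightarrow> (int \<Rightarrow> (nat \<Rightarrow> real) \<Rightarrow> (nat \<Rightarrow> real)) \<Rightarrow> (nat \<Rightarrow> real) set \<Rightarrow> (nat \<Rightarrow> real) set set" where
  "face_family n \<tau> f = {comp_tau \<tau> ks ` f | ks. valid n \<tau> f ks}"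

text \<open>Facets are identified with their signed indices; Xi(f) = {j. f \<subseteq> F(j)}.\<close>
definition Xi :: "nat \<Rightarrow> (nat \<Rightarrow> real) set \<Rightarrow> int set" where
  "Xi n f = {j \<in> pm n. f \<subseteq> facet n j}"

definition Psi :: "nat \<Rightarrow> (int \<Rightarrow> int) \<Rightarrow> (int \<Rightarrow> (nat \<Rightarrow> real) \<Rightarrow> (nat \<Rightarrow> real)) \<Rightarrow> int \<Rightarrow> int \<Rightarrow> int" where
  "Psi n \<omega> \<tau> k j = (if j = k then \<omega> k
      else (THE g. g \<in> pm n \<and> facet n g \<inter> facet n (\<omega> k) = \<tau> k ` (facet n j \<inter> facet n k)))"

fun comp_Psi :: "nat \<Rightarrow> (int \<Rightarrow> int) \<Rightarrow> (int \<Rightarrow> (nat \<Rightarrow> real) \<Rightarrow> (nat \<Rightarrow> real)) \<Rightarrow> int list \<Rightarrow> int \<Rightarrow> int" where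
  "comp_Psi n \<omega> \<tau> [] j = j"
| "comp_Psi n \<omega> \<tau> (k # ks) j = comp_Psi n \<omega> \<tau> ks (Psi n \<omega> \<tau> k j)"

definition strong :: "nat \<Rightarrow> (int \<Rightarrow> int) \<Rightarrow> (int \<Rightarrow> (nat \<Rightarrow> real) \<Rightarrow> (nat \<Rightarrow> real)) \<Rightarrow> bool" where
  "strong n \<omega> \<tau> \<longleftrightarrow>
     (\<forall>f\<in>proper_faces n. \<forall>ks ls. valid n \<tau> f ks \<and> valid n \<tau> f ls \<and>
        comp_tau \<tau> ks ` f = comp_tau \<tau> ls ` f \<longrightarrow>
        (\<forall>p\<in>f. comp_tau \<tau> ks p = comp_tau \<tau> ls p) \<and>
        (\<forall>j\<in>Xi n f. comp_Psi n \<omega> \<tau> ks j = comp_Psi n \<omega> \<tau> ls j))"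

end

theory Submission
  imports Defs
begin

(*
  Let f be a proper face.  Along a valid composition of pairing maps
  the facets through f are transported by the maps Psi; by condition (b) of
  strongness the result depends only on the face reached.  So every face g of the
  family carries a well-defined labelling of its facets by the facets through f
  (the "label" of g), and for each facet i through f there is a move
  g |-> tau_(label g i)(g) on the family.  Each move is an involution, two moves
  commute by the compatibility of the pairing maps around ridges, and the family
  is exactly the orbit of f under the moves.  An orbit of finitely many pairwise
  commuting involutions has a power of two as cardinality.
*)

locale commuting_involutions =
  fixes X :: "'a set" and I :: "'i set" and m :: "'i \<Rightarrow> 'a \<Rightarrow> 'a"
  assumes closed: "i \<in> I \<Longrightarrow> x \<in> X \<Longrightarrow> m i x \<in> X"
    and involution: "i \<in> I \<Longrightarrow> x \<in> X \<Longrightarrow> m i (m i x) = x"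
    and commute: "i \<in> I \<Longrightarrow> j \<in> I \<Longrightarrow> x \<in> X \<Longrightarrow> m i (m j x) = m j (m i x)"
begin

inductive_set orbit :: "'i set \<Rightarrow> 'a \<Rightarrow> 'a set" for A x where
  base: "x \<in> orbit A x"
| step: "y \<in> orbit A x \<Longrightarrow> i \<in> A \<Longrightarrow> m i y \<in> orbit A x"

lemma orbit_subset: "x \<in> X \<Longrightarrow> A \<subseteq> I \<Longrightarrow> orbit A x \<subseteq> X"
proof
  fix y assume "y \<in> orbit A x" "x \<in> X" "A \<subseteq> I"
  then show "y \<in> X" by induction (auto intro: closed)
qed

lemma orbit_mono: "A \<subseteq> B \<Longrightarrow> orbit A x \<subseteq> orbit B x"
proof
  fix y assume "y \<in> orbit A x" "A \<subseteq> B"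
  then show "y \<in> orbit B x" by induction (auto intro: orbit.intros)
qed

lemma orbit_trans: "z \<in> orbit A y \<Longrightarrow> y \<in> orbit A x \<Longrightarrow> z \<in> orbit A x"
  by (induction rule: orbit.induct) (auto intro: orbit.step)

text \<open>Orbits are symmetric since the generators are involutions.\<close>
lemma orbit_sym:
  assumes "y \<in> orbit A x" "x \<in> X" "A \<subseteq> I"
  shows "x \<in> orbit A y"
  using assms
proof induction
  case base
  show ?case by (rule orbit.base)
next
  case (step y i)
  have "y \<in> X" using step.hyps(1) orbit_subset step.prems by blast
  then have "y \<in> orbit A (m i y)"
    using orbit.step[OF orbit.base, of i A "m i y"] involution step by auto
  then show ?case using orbit_trans step by blast
qed

lemma orbit_eq:
  assumes "z \<in> orbit A x" "z \<in> orbit A y" "x \<in> X" "y \<in> X" "A \<subseteq> I"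
  shows "orbit A x = orbit A y"
proof -
  have "x \<in> orbit A y"
    using orbit_trans[OF orbit_sym[OF assms(1,3,5)] assms(2)] .
  moreover have "y \<in> orbit A x"
    using orbit_trans[OF orbit_sym[OF assms(2,4,5)] assms(1)] .
  ultimately show ?thesis using orbit_trans by blast
qed

text \<open>Since the involutions commute, \<open>m i\<close> maps orbits onto orbits.\<close>
lemma orbit_move_subset:
  assumes "x \<in> X" "A \<subseteq> I" "i \<in> I"
  shows "m i ` orbit A x \<subseteq> orbit A (m i x)"
proof
  fix z assume "z \<in> m i ` orbit A x"
  then obtain y where y: "y \<in> orbit A x" and z: "z = m i y" by blast
  from y have "m i y \<in> orbit A (m i x)"
  proof induction
    case base then show ?case by (rule orbit.base)
  next
    case (step y j)
    have "y \<in> X" using step.hyps(1) orbit_subset assms by blast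
    then have "m i (m j y) = m j (m i y)" using commute assms step.hyps(2) by blast
    then show ?case using orbit.step[OF step.IH step.hyps(2)] by simp
  qed
  then show "z \<in> orbit A (m i x)" using z by simp
qed

lemma orbit_move:
  assumes "x \<in> X" "A \<subseteq> I" "i \<in> I"
  shows "orbit A (m i x) = m i ` orbit A x"
proof
  show "m i ` orbit A x \<subseteq> orbit A (m i x)" using orbit_move_subset assms .
  have "m i ` orbit A (m i x) \<subseteq> orbit A x"
    using orbit_move_subset[OF closed[OF assms(3,1)] assms(2,3)] involution assms by simp
  then have "m i ` m i ` orbit A (m i x) \<subseteq> m i ` orbit A x" by blast
  moreover have "m i ` m i ` orbit A (m i x) = orbit A (m i x)"
    using orbit_subset[OF closed[OF assms(3,1)] assms(2)] involution[OF assms(3)]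
    by (force simp: image_image)
  ultimately show "orbit A (m i x) \<subseteq> m i ` orbit A x" by simp
qed

lemma orbit_insert:
  assumes "x \<in> X" "A \<subseteq> I" "i \<in> I"
  shows "orbit (insert i A) x = orbit A x \<union> orbit A (m i x)"
proof
  have "m i x \<in> orbit (insert i A) x" by (blast intro: orbit.intros)
  then have "orbit A (m i x) \<subseteq> orbit (insert i A) x"
    using orbit_mono[of A "insert i A"] orbit_trans by blast
  then show "orbit A x \<union> orbit A (m i x) \<subseteq> orbit (insert i A) x"
    using orbit_mono[of A "insert i A"] by blast
next
  show "orbit (insert i A) x \<subseteq> orbit A x \<union> orbit A (m i x)"
  proof
    fix y assume "y \<in> orbit (insert i A) x"
    then show "y \<in> orbit A x \<union> orbit A (m i x)"
    proof induction
      case base then show ?case by (blast intro: orbit.base)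
    next
      case (step y j)
      show ?case
      proof (cases "j \<in> A")
        case True
        then show ?thesis using step.IH by (blast intro: orbit.step)
      next
        case False
        then have j: "j = i" using step.hyps(2) by blast
        have mx: "m i x \<in> X" using closed assms by blast
        have orbit_back: "m i ` orbit A (m i x) = orbit A x"
          using orbit_move[OF mx assms(2,3)] involution assms by simp
        from step.IH show ?thesis
        proof
          assume "y \<in> orbit A x"
          then have "m i y \<in> orbit A (m i x)" using orbit_move[OF assms] by blast
          then show ?thesis using j by blast
        next
          assume "y \<in> orbit A (m i x)"
          then have "m i y \<in> orbit A x" using orbit_back by blast
          then show ?thesis using j by blast
        qed
      qed
    qed
  qed
qed

text \<open>The orbit of a point under finitely many pairwise commuting involutions
  has a power of two as cardinality: each new involution either preserves the
  orbit or doubles it by a disjoint translate.\<close>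
theorem card_orbit_power_of_two:
  assumes "finite X" "x \<in> X" "finite A" "A \<subseteq> I"
  shows "\<exists>k. card (orbit A x) = 2 ^ k"
  using assms(3,4,2)
proof (induction A arbitrary: x rule: finite_induct)
  case empty
  have "orbit {} x = {x}"
  proof -
    have "y = x" if "y \<in> orbit {} x" for y using that by induction auto
    then show ?thesis by (blast intro: orbit.base)
  qed
  then have "card (orbit {} x) = 2 ^ 0" by simp
  then show ?case by blast
next
  case (insert i A)
  have A: "A \<subseteq> I" and i: "i \<in> I" using insert.prems by auto
  obtain k where k: "card (orbit A x) = 2 ^ k" using insert.IH A insert.prems(2) by blast
  have mx: "m i x \<in> X" using closed i insert.prems(2) by blast
  have fin: "finite (orbit A y)" if "y \<in> X" for y
    using orbit_subset[OF that A] assms(1) finite_subset by blast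
  have "inj_on (m i) X" by (rule inj_on_inverseI[where g = "m i"]) (rule involution[OF i])
  then have same_card: "card (orbit A (m i x)) = card (orbit A x)"
    using orbit_move[OF insert.prems(2) A i] orbit_subset[OF insert.prems(2) A]
    by (simp add: card_image inj_on_subset)
  show ?case
  proof (cases "orbit A x \<inter> orbit A (m i x) = {}")
    case True
    then have "card (orbit (insert i A) x) = card (orbit A x) + card (orbit A (m i x))"
      using orbit_insert[OF insert.prems(2) A i]
        card_Un_disjoint[OF fin[OF insert.prems(2)] fin[OF mx]] by simp
    then have "card (orbit (insert i A) x) = 2 ^ Suc k"
      using k same_card by simp
    then show ?thesis by blast
  next
    case False
    then obtain z where "z \<in> orbit A x" "z \<in> orbit A (m i x)" by blast
    then have "orbit A x = orbit A (m i x)" using orbit_eq insert.prems(2) mx A by blast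
    then show ?thesis using orbit_insert[OF insert.prems(2) A i] k by auto
  qed
qed

end
text \<open>The corner of the cube with coordinate \<open>sgn j / 4\<close> in direction \<open>|j|\<close> for
  \<open>j \<in> A\<close> and \<open>0\<close> elsewhere; it lies in \<open>F(A)\<close> and in no other facet, so it
  witnesses that a proper face determines its index set.\<close>
definition corner :: "nat \<Rightarrow> int set \<Rightarrow> nat \<Rightarrow> real" where
  "corner n A = (\<lambda>i. if i \<in> {1..n} then
     (if int i \<in> A then 1/4 else if - int i \<in> A then -1/4 else 0) else 0)"

lemma pm_iff: "j \<in> pm n \<longleftrightarrow> j \<noteq> 0 \<and> \<bar>j\<bar> \<le> int n"
  by (simp add: pm_def)

lemma finite_pm: "finite (pm n)"
  by (rule finite_subset[of _ "{-int n..int n}"]) (auto simp: pm_def)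

lemma corner_coord:
  assumes "admissible n A" "a \<in> pm n"
  shows "corner n A (nat \<bar>a\<bar>) = of_int (sgn a) / 4 \<longleftrightarrow> a \<in> A"
proof -
  have range: "nat \<bar>a\<bar> \<in> {1..n}" using assms(2) by (auto simp: pm_iff)
  have "a > 0 \<or> a < 0" using assms(2) by (auto simp: pm_iff)
  then show ?thesis
  proof
    assume "a > 0"
    then show ?thesis using range assms(1) unfolding admissible_def by (auto simp: corner_def)
  next
    assume "a < 0"
    then have "int (nat \<bar>a\<bar>) = -a" by simp
    then show ?thesis using range \<open>a < 0\<close> assms(1) unfolding admissible_def
      by (auto simp: corner_def)
  qed
qed

lemma corner_in_face:
  assumes "admissible n A"
  shows "corner n A \<in> face n A"
proof -
  have "corner n A \<in> cube n" by (auto simp: corner_def cube_def)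
  moreover have "corner n A (nat \<bar>j\<bar>) = of_int (sgn j) / 4" "j \<in> pm n" if "j \<in> A" for j
    using corner_coord[OF assms] that assms by (auto simp: admissible_def)
  ultimately show ?thesis unfolding face_def facet_def by auto
qed

lemma face_nonempty: "admissible n A \<Longrightarrow> face n A \<noteq> {}"
  using corner_in_face by blast

lemma face_subset_iff:
  assumes "admissible n A" "admissible n B"
  shows "face n A \<subseteq> face n B \<longleftrightarrow> B \<subseteq> A"
proof
  assume sub: "face n A \<subseteq> face n B"
  show "B \<subseteq> A"
  proof
    fix b assume b: "b \<in> B"
    then have "b \<in> pm n" using assms(2) by (auto simp: admissible_def)
    moreover have "corner n A \<in> facet n b"
      using sub corner_in_face[OF assms(1)] b unfolding face_def by blast
    ultimately show "b \<in> A" using corner_coord[OF assms(1)] by (simp add: facet_def)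
  qed
qed (auto simp: face_def)

lemma face_inj:
  assumes "admissible n A" "admissible n B" "face n A = face n B"
  shows "A = B"
  using face_subset_iff[OF assms(1,2)] face_subset_iff[OF assms(2,1)] assms(3) by auto

lemma face_facet_iff:
  assumes "admissible n A" "m \<in> pm n"
  shows "face n A \<subseteq> facet n m \<longleftrightarrow> m \<in> A"
proof -
  have "admissible n {m}" using assms(2) by (auto simp: admissible_def pm_iff)
  moreover have "face n {m} = facet n m" by (simp add: face_def)
  ultimately show ?thesis using face_subset_iff[OF assms(1), of "{m}"] by simp
qed

lemma opposite_facets_disjoint: "facet n m \<inter> facet n (- m) = {}"
  by (auto simp: facet_def pm_iff sgn_if split: if_splits)

lemma admissible_pair:
  "a \<in> pm n \<Longrightarrow> b \<in> pm n \<Longrightarrow> \<bar>a\<bar> \<noteq> \<bar>b\<bar> \<Longrightarrow> admissible n {a, b}"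
  by (auto simp: admissible_def pm_iff)

lemma face_pair: "face n {a, b} = facet n a \<inter> facet n b"
  by (simp add: face_def)

lemma proper_faces_iff: "g \<in> proper_faces n \<longleftrightarrow> (\<exists>A. admissible n A \<and> g = face n A)"
  by (auto simp: proper_faces_def)

lemma proper_face_nonempty: "g \<in> proper_faces n \<Longrightarrow> g \<noteq> {}"
  using face_nonempty by (auto simp: proper_faces_iff)

lemma finite_proper_faces: "finite (proper_faces n)"
proof -
  have "proper_faces n \<subseteq> face n ` Pow (pm n)"
    unfolding proper_faces_def admissible_def by auto
  then show ?thesis using finite_pm finite_subset by blast
qed

lemma finite_Xi: "finite (Xi n g)"
  by (rule finite_subset[OF _ finite_pm[of n]]) (auto simp: Xi_def)

lemma Xi_distinct_abs:
  assumes "g \<noteq> {}" "j \<in> Xi n g" "k \<in> Xi n g" "j \<noteq> k"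
  shows "\<bar>j\<bar> \<noteq> \<bar>k\<bar>"
proof
  assume "\<bar>j\<bar> = \<bar>k\<bar>"
  then have "k = - j" using assms(4) by arith
  then have "g \<subseteq> facet n j \<inter> facet n (- j)" using assms(2,3) by (auto simp: Xi_def)
  then show False using assms(1) opposite_facets_disjoint by blast
qed

text \<open>A ridge \<open>F(w,k)\<close> of \<open>F(w)\<close> determines \<open>k\<close>; this makes the definite
  description in \<open>Psi\<close> meaningful.\<close>
lemma ridge_index_unique:
  assumes "w \<in> pm n" "k \<in> pm n" "g \<in> pm n" "\<bar>k\<bar> \<noteq> \<bar>w\<bar>"
    and eq: "facet n g \<inter> facet n w = facet n w \<inter> facet n k"
  shows "g = k"
proof -
  have adm: "admissible n {w, k}" using admissible_pair assms(1,2,4) by metis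
  then have ridge: "face n {g, w} = face n {w, k}" using eq by (simp add: face_pair)
  consider "g = w" | "g = - w" | "\<bar>g\<bar> \<noteq> \<bar>w\<bar>" by arith
  then show ?thesis
  proof cases
    case 1
    then have "face n {w} = face n {w, k}" using ridge by simp
    moreover have "admissible n {w}" using assms(1) by (auto simp: admissible_def pm_iff)
    ultimately have "{w} = {w, k}" using face_inj adm by blast
    then show ?thesis using assms(4) by auto
  next
    case 2
    then have "face n {w, k} = {}" using ridge opposite_facets_disjoint[of n w]
      by (auto simp: face_pair)
    then show ?thesis using face_nonempty[OF adm] by blast
  next
    case 3
    then have "{g, w} = {w, k}" using face_inj[OF admissible_pair adm] assms ridge by blast
    then show ?thesis using 3 by auto
  qed
qed

lemma valid_snoc:
  "valid n \<tau> h (ks @ [k]) \<longleftrightarrow> valid n \<tau> h ks \<and> k \<in> pm n \<and> comp_tau \<tau> ks ` h \<subseteq> facet n k"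
  by (induction ks arbitrary: h) (auto simp: image_image)

lemma comp_tau_snoc: "comp_tau \<tau> (ks @ [k]) ` h = \<tau> k ` comp_tau \<tau> ks ` h"
proof -
  have "comp_tau \<tau> (ks @ [k]) p = \<tau> k (comp_tau \<tau> ks p)" for p
    by (induction ks arbitrary: p) auto
  then show ?thesis by (simp add: image_image)
qed

lemma comp_Psi_snoc:
  "comp_Psi n \<omega> \<tau> (ks @ [k]) j = Psi n \<omega> \<tau> k (comp_Psi n \<omega> \<tau> ks j)"
  by (induction ks arbitrary: j) auto

locale facets_pairing_structure =
  fixes n :: nat and \<omega> :: "int \<Rightarrow> int"
    and \<tau> :: "int \<Rightarrow> (nat \<Rightarrow> real) \<Rightarrow> (nat \<Rightarrow> real)"
  assumes pairing: "facets_pairing n \<omega> \<tau>"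
begin

lemmas pairing_conditions = pairing[unfolded facets_pairing_def]

lemma omega_pm: "j \<in> pm n \<Longrightarrow> \<omega> j \<in> pm n"
  using pairing_conditions[THEN conjunct1] by (rule bij_betw_apply)

lemma omega_omega: "j \<in> pm n \<Longrightarrow> \<omega> (\<omega> j) = j"
  using pairing_conditions[THEN conjunct2, THEN conjunct1] by blast

lemma tau_homeomorphism:
  "j \<in> pm n \<Longrightarrow> homeomorphism (facet n j) (facet n (\<omega> j)) (\<tau> j) (\<tau> (\<omega> j))"
  using pairing_conditions[THEN conjunct2, THEN conjunct2, THEN conjunct1] by blast

lemma tau_proper_face:
  "j \<in> pm n \<Longrightarrow> g \<in> proper_faces n \<Longrightarrow> g \<subseteq> facet n j \<Longrightarrow>
     \<tau> j ` g \<in> proper_faces n \<and> \<tau> j ` g \<subseteq> facet n (\<omega> j)"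
  using pairing_conditions[THEN conjunct2, THEN conjunct2, THEN conjunct2, THEN conjunct1]
  by blast

lemma tau_compatible:
  assumes "j \<in> pm n" "k \<in> pm n" "k' \<in> pm n" "j' \<in> pm n"
    "\<bar>j\<bar> \<noteq> \<bar>k\<bar>" "\<bar>k'\<bar> \<noteq> \<bar>\<omega> j\<bar>" "\<bar>j'\<bar> \<noteq> \<bar>\<omega> k\<bar>"
    "\<tau> j ` face n {j, k} = face n {\<omega> j, k'}" "\<tau> k ` face n {j, k} = face n {j', \<omega> k}"
    "p \<in> face n {j, k}"
  shows "\<tau> k' (\<tau> j p) = \<tau> j' (\<tau> k p)"
  using pairing_conditions[THEN conjunct2, THEN conjunct2, THEN conjunct2, THEN conjunct2,
      rule_format, OF assms(1-4)] assms(5-10)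
  by blast

lemma tau_inj: "j \<in> pm n \<Longrightarrow> inj_on (\<tau> j) (facet n j)"
  using tau_homeomorphism unfolding homeomorphism_def by (metis inj_on_inverseI)

lemma tau_facet: "j \<in> pm n \<Longrightarrow> \<tau> j ` facet n j = facet n (\<omega> j)"
  using tau_homeomorphism unfolding homeomorphism_def by blast

lemma tau_back:
  assumes "j \<in> pm n" "h \<subseteq> facet n j"
  shows "\<tau> (\<omega> j) ` \<tau> j ` h = h"
proof -
  have "\<tau> (\<omega> j) (\<tau> j x) = x" if "x \<in> h" for x
    using tau_homeomorphism[OF assms(1)] that assms(2) unfolding homeomorphism_def by blast
  then show ?thesis by (simp add: image_image)
qed

lemma tau_face_image:
  assumes "j \<in> pm n" "admissible n A" "j \<in> A"
  obtains T where "admissible n T" "\<omega> j \<in> T" "\<tau> j ` face n A = face n T"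
proof -
  have "face n A \<in> proper_faces n" "face n A \<subseteq> facet n j"
    using assms face_facet_iff by (auto simp: proper_faces_iff admissible_def)
  then have "\<tau> j ` face n A \<in> proper_faces n" "\<tau> j ` face n A \<subseteq> facet n (\<omega> j)"
    using tau_proper_face[OF assms(1)] by auto
  then show ?thesis using that face_facet_iff omega_pm[OF assms(1)] by (auto simp: proper_faces_iff)
qed

lemma tau_image_is_facet:
  assumes "j \<in> pm n" "admissible n A" "j \<in> A" "\<tau> j ` face n A = facet n (\<omega> j)"
  shows "A = {j}"
proof -
  have "face n A \<subseteq> facet n j" using assms face_facet_iff by (auto simp: admissible_def)
  then have "face n A = facet n j"
    using assms(4) tau_facet[OF assms(1)] inj_on_image_eq_iff[OF tau_inj[OF assms(1)]] by blast
  then show ?thesis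
    using face_inj[OF assms(2), of "{j}"] assms(1) by (auto simp: face_def admissible_def pm_iff)
qed

text \<open>The pairing map \<open>\<tau>\<^sub>j\<close> carries each ridge \<open>F(j,k)\<close> of \<open>F(j)\<close> onto a ridge
  \<open>F(\<omega> j, k')\<close> of \<open>F(\<omega> j)\<close>: the image is a proper face strictly inside
  \<open>F(\<omega> j)\<close>, and no face lies strictly between it and \<open>F(\<omega> j)\<close>, since
  \<open>\<tau>\<^bsub>\<omega> j\<^esub>\<close> pulls such a face back between \<open>F(j,k)\<close> and \<open>F(j)\<close>.\<close>
lemma tau_ridge_image:
  assumes j: "j \<in> pm n" and k: "k \<in> pm n" and jk: "\<bar>j\<bar> \<noteq> \<bar>k\<bar>"
  obtains k' where "k' \<in> pm n" "\<bar>k'\<bar> \<noteq> \<bar>\<omega> j\<bar>" "\<tau> j ` face n {j, k} = face n {\<omega> j, k'}"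
proof -
  define A where "A = {j, k}"
  have admA: "admissible n A" using admissible_pair[OF j k jk] by (simp add: A_def)
  obtain T where admT: "admissible n T" and wT: "\<omega> j \<in> T" and T: "\<tau> j ` face n A = face n T"
    using tau_face_image[OF j admA] by (auto simp: A_def)
  have "T \<noteq> {\<omega> j}"
  proof
    assume "T = {\<omega> j}"
    then have "\<tau> j ` face n A = facet n (\<omega> j)" using T by (simp add: face_def)
    then show False using tau_image_is_facet[OF j admA] jk by (auto simp: A_def)
  qed
  then obtain k' where k'T: "k' \<in> T" and k'w: "k' \<noteq> \<omega> j" using wT by blast
  have k': "k' \<in> pm n" and "- \<omega> j \<notin> T" using admT wT k'T by (auto simp: admissible_def)
  then have k'abs: "\<bar>k'\<bar> \<noteq> \<bar>\<omega> j\<bar>" using k'T k'w by (cases "k' = - \<omega> j") auto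
  define B where "B = {\<omega> j, k'}"
  have wj: "\<omega> j \<in> pm n" using omega_pm[OF j] .
  have admB: "admissible n B" using admissible_pair[OF wj k'] k'abs by (simp add: B_def)
  have TB: "face n T \<subseteq> face n B" using face_subset_iff[OF admT admB] wT k'T by (simp add: B_def)
  have B_wj: "face n B \<subseteq> facet n (\<omega> j)" by (auto simp: B_def face_pair)
  obtain U where admU: "admissible n U" and jU: "j \<in> U" and U: "\<tau> (\<omega> j) ` face n B = face n U"
    using tau_face_image[OF wj admB] omega_omega[OF j] by (auto simp: B_def)
  have A_j: "face n A \<subseteq> facet n j" by (auto simp: A_def face_pair)
  have "face n A = \<tau> (\<omega> j) ` face n T" using tau_back[OF j A_j] T by simp
  also have "\<dots> \<subseteq> face n U" using TB U by blast
  finally have "U \<subseteq> A" using face_subset_iff[OF admA admU] by simp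
  moreover have "U \<noteq> {j}"
  proof
    assume "U = {j}"
    then have "\<tau> (\<omega> j) ` face n B = facet n (\<omega> (\<omega> j))"
      using U omega_omega[OF j] by (simp add: face_def)
    then show False using tau_image_is_facet[OF wj admB] k'w by (auto simp: B_def)
  qed
  ultimately have "U = A" using jU by (auto simp: A_def)
  then have "\<tau> (\<omega> j) ` face n B = \<tau> (\<omega> j) ` face n T"
    using U tau_back[OF j A_j] T by simp
  then have "face n B = face n T"
    using inj_on_image_eq_iff[OF tau_inj[OF wj] B_wj] TB B_wj by blast
  then show ?thesis using that[OF k' k'abs] T by (simp add: A_def B_def)
qed

lemma Psi_ridge:
  assumes j: "j \<in> pm n" and k: "k \<in> pm n" and jk: "\<bar>j\<bar> \<noteq> \<bar>k\<bar>"
  shows "Psi n \<omega> \<tau> j k \<in> pm n" "\<bar>Psi n \<omega> \<tau> j k\<bar> \<noteq> \<bar>\<omega> j\<bar>"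
    and "\<tau> j ` face n {j, k} = face n {\<omega> j, Psi n \<omega> \<tau> j k}"
proof -
  obtain k' where k': "k' \<in> pm n" "\<bar>k'\<bar> \<noteq> \<bar>\<omega> j\<bar>" and
    img: "\<tau> j ` face n {j, k} = face n {\<omega> j, k'}"
    using tau_ridge_image[OF j k jk] .
  have img': "\<tau> j ` (facet n k \<inter> facet n j) = facet n (\<omega> j) \<inter> facet n k'"
    using img by (simp add: face_pair Int_commute)
  have "(THE g. g \<in> pm n \<and> facet n g \<inter> facet n (\<omega> j) = \<tau> j ` (facet n k \<inter> facet n j)) = k'"
    using ridge_index_unique[OF omega_pm[OF j] k'(1) _ k'(2)] k'(1) img'
    by (intro the_equality) auto
  moreover have "k \<noteq> j" using jk by auto
  ultimately have "Psi n \<omega> \<tau> j k = k'" by (simp add: Psi_def)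
  then show "Psi n \<omega> \<tau> j k \<in> pm n" "\<bar>Psi n \<omega> \<tau> j k\<bar> \<noteq> \<bar>\<omega> j\<bar>"
    and "\<tau> j ` face n {j, k} = face n {\<omega> j, Psi n \<omega> \<tau> j k}"
    using k' img by simp_all
qed

lemma Psi_in_Xi:
  assumes g: "g \<in> proper_faces n" and k: "k \<in> pm n" and gk: "g \<subseteq> facet n k"
    and j: "j \<in> Xi n g"
  shows "Psi n \<omega> \<tau> k j \<in> Xi n (\<tau> k ` g)"
proof (cases "j = k")
  case True
  then show ?thesis using tau_proper_face[OF k g gk] omega_pm[OF k]
    by (simp add: Psi_def Xi_def)
next
  case False
  have kXi: "k \<in> Xi n g" using k gk by (simp add: Xi_def)
  have jp: "j \<in> pm n" and abs: "\<bar>k\<bar> \<noteq> \<bar>j\<bar>"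
    using j Xi_distinct_abs[OF proper_face_nonempty[OF g] kXi j] False by (auto simp: Xi_def)
  have "g \<subseteq> face n {k, j}" using gk j by (auto simp: Xi_def face_pair)
  then have "\<tau> k ` g \<subseteq> face n {\<omega> k, Psi n \<omega> \<tau> k j}"
    using Psi_ridge(3)[OF k jp abs] by blast
  then show ?thesis using Psi_ridge(1)[OF k jp abs] by (auto simp: Xi_def face_pair)
qed

text \<open>\<open>\<Psi>\<^bsub>\<omega> k\<^esub>\<close> undoes \<open>\<Psi>\<^sub>k\<close>, because \<open>\<tau>\<^bsub>\<omega> k\<^esub>\<close> undoes \<open>\<tau>\<^sub>k\<close> on ridges.\<close>
lemma Psi_inverse:
  assumes k: "k \<in> pm n" and j: "j \<in> pm n" and jk: "j = k \<or> \<bar>k\<bar> \<noteq> \<bar>j\<bar>"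
  shows "Psi n \<omega> \<tau> (\<omega> k) (Psi n \<omega> \<tau> k j) = j"
  using jk
proof
  assume "j = k"
  then show ?thesis using omega_omega[OF k] by (simp add: Psi_def)
next
  assume abs: "\<bar>k\<bar> \<noteq> \<bar>j\<bar>"
  define k' where "k' = Psi n \<omega> \<tau> k j"
  have wk: "\<omega> k \<in> pm n" using omega_pm[OF k] .
  have k': "k' \<in> pm n" "\<bar>\<omega> k\<bar> \<noteq> \<bar>k'\<bar>" using Psi_ridge(1,2)[OF k j abs] by (auto simp: k'_def)
  have "face n {k, j} = \<tau> (\<omega> k) ` face n {\<omega> k, k'}"
    using Psi_ridge(3)[OF k j abs] tau_back[OF k, of "face n {k, j}"]
    by (auto simp: k'_def face_pair)
  also have "\<dots> = face n {k, Psi n \<omega> \<tau> (\<omega> k) k'}"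
    using Psi_ridge(3)[OF wk k'] omega_omega[OF k] by simp
  finally have eq: "face n {k, j} = face n {k, Psi n \<omega> \<tau> (\<omega> k) k'}" .
  have "\<bar>Psi n \<omega> \<tau> (\<omega> k) k'\<bar> \<noteq> \<bar>k\<bar>" "Psi n \<omega> \<tau> (\<omega> k) k' \<in> pm n"
    using Psi_ridge(1,2)[OF wk k'] omega_omega[OF k] by auto
  then have "{k, j} = {k, Psi n \<omega> \<tau> (\<omega> k) k'}"
    using face_inj[OF admissible_pair[OF k j abs] admissible_pair[OF k] eq] by metis
  then show ?thesis using abs by (auto simp: k'_def doubleton_eq_iff)
qed

lemma Psi_bij:
  assumes g: "g \<in> proper_faces n" and k: "k \<in> pm n" and gk: "g \<subseteq> facet n k"
  shows "bij_betw (Psi n \<omega> \<tau> k) (Xi n g) (Xi n (\<tau> k ` g))"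
proof (rule bij_betwI)
  define g' where "g' = \<tau> k ` g"
  have g': "g' \<in> proper_faces n" "g' \<subseteq> facet n (\<omega> k)"
    using tau_proper_face[OF k g gk] by (auto simp: g'_def)
  have wk: "\<omega> k \<in> pm n" using omega_pm[OF k] .
  have kXi: "k \<in> Xi n g" using k gk by (simp add: Xi_def)
  have wkXi: "\<omega> k \<in> Xi n g'" using wk g' by (simp add: Xi_def)
  show "Psi n \<omega> \<tau> k \<in> Xi n g \<rightarrow> Xi n (\<tau> k ` g)" using Psi_in_Xi[OF g k gk] by blast
  show "Psi n \<omega> \<tau> (\<omega> k) \<in> Xi n (\<tau> k ` g) \<rightarrow> Xi n g"
    using Psi_in_Xi[OF g'(1) wk g'(2)] tau_back[OF k gk] by (auto simp: g'_def)
  show "Psi n \<omega> \<tau> (\<omega> k) (Psi n \<omega> \<tau> k j) = j" if "j \<in> Xi n g" for j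
    using Psi_inverse[OF k] Xi_distinct_abs[OF proper_face_nonempty[OF g] kXi that] that
    by (auto simp: Xi_def)
  show "Psi n \<omega> \<tau> k (Psi n \<omega> \<tau> (\<omega> k) j) = j" if "j \<in> Xi n (\<tau> k ` g)" for j
    using Psi_inverse[OF wk] omega_omega[OF k] that
      Xi_distinct_abs[OF proper_face_nonempty[OF g'(1)] wkXi, of j]
    by (auto simp: Xi_def g'_def)
qed

lemma valid_composition:
  assumes f: "f \<in> proper_faces n" and "valid n \<tau> f ks"
  shows "comp_tau \<tau> ks ` f \<in> proper_faces n"
    and "bij_betw (comp_Psi n \<omega> \<tau> ks) (Xi n f) (Xi n (comp_tau \<tau> ks ` f))"
proof -
  have "comp_tau \<tau> ks ` f \<in> proper_faces n \<and>
      bij_betw (comp_Psi n \<omega> \<tau> ks) (Xi n f) (Xi n (comp_tau \<tau> ks ` f))"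
    using assms(2)
  proof (induction ks rule: rev_induct)
    case Nil
    show ?case using f by (simp add: bij_betw_def)
  next
    case (snoc k ks)
    have "valid n \<tau> f ks" and k: "k \<in> pm n" and sub: "comp_tau \<tau> ks ` f \<subseteq> facet n k"
      using snoc.prems valid_snoc by blast+
    then have IH: "comp_tau \<tau> ks ` f \<in> proper_faces n"
      "bij_betw (comp_Psi n \<omega> \<tau> ks) (Xi n f) (Xi n (comp_tau \<tau> ks ` f))"
      using snoc.IH by blast+
    have "comp_Psi n \<omega> \<tau> (ks @ [k]) = Psi n \<omega> \<tau> k \<circ> comp_Psi n \<omega> \<tau> ks"
      by (rule ext) (simp add: comp_Psi_snoc)
    then show ?case
      using tau_proper_face[OF k IH(1) sub] bij_betw_trans[OF IH(2) Psi_bij[OF IH(1) k sub]]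
      unfolding comp_tau_snoc by (simp add: comp_def)
  qed
  then show "comp_tau \<tau> ks ` f \<in> proper_faces n"
    and "bij_betw (comp_Psi n \<omega> \<tau> ks) (Xi n f) (Xi n (comp_tau \<tau> ks ` f))" by blast+
qed

lemma tau_commute_ridge:
  assumes j: "j \<in> pm n" and k: "k \<in> pm n" and jk: "\<bar>j\<bar> \<noteq> \<bar>k\<bar>" and p: "p \<in> face n {j, k}"
  shows "\<tau> (Psi n \<omega> \<tau> j k) (\<tau> j p) = \<tau> (Psi n \<omega> \<tau> k j) (\<tau> k p)"
proof -
  have kj: "\<bar>k\<bar> \<noteq> \<bar>j\<bar>" using jk by simp
  have "\<tau> k ` face n {j, k} = face n {Psi n \<omega> \<tau> k j, \<omega> k}"
    using Psi_ridge(3)[OF k j kj] by (simp add: insert_commute)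
  then show ?thesis
    using tau_compatible[OF j k Psi_ridge(1)[OF j k jk] Psi_ridge(1)[OF k j kj] jk
        Psi_ridge(2)[OF j k jk] Psi_ridge(2)[OF k j kj] Psi_ridge(3)[OF j k jk] _ p] by blast
qed

end

locale strong_pairing_face = facets_pairing_structure +
  fixes f :: "(nat \<Rightarrow> real) set"
  assumes strong: "strong n \<omega> \<tau>" and f_proper: "f \<in> proper_faces n"
begin

abbreviation family :: "(nat \<Rightarrow> real) set set" where
  "family \<equiv> face_family n \<tau> f"

lemma familyI: "valid n \<tau> f ks \<Longrightarrow> comp_tau \<tau> ks ` f \<in> family"
  unfolding face_family_def by blast

lemma familyE:
  assumes "g \<in> family"
  obtains ks where "valid n \<tau> f ks" "g = comp_tau \<tau> ks ` f"
  using assms unfolding face_family_def by blast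

lemma f_in_family: "f \<in> family"
  using familyI[of "[]"] by simp

lemma family_proper:
  assumes "g \<in> family"
  shows "g \<in> proper_faces n"
proof -
  obtain ks where "valid n \<tau> f ks" "g = comp_tau \<tau> ks ` f"
    using assms by (rule familyE)
  then show ?thesis using valid_composition(1)[OF f_proper] by simp
qed

lemma finite_family: "finite family"
proof (rule finite_subset[OF _ finite_proper_faces])
  show "family \<subseteq> proper_faces n" using family_proper by (rule subsetI)
qed

lemma transport_unique:
  assumes "valid n \<tau> f ks" "valid n \<tau> f ls" "comp_tau \<tau> ks ` f = comp_tau \<tau> ls ` f"
    and "j \<in> Xi n f"
  shows "comp_Psi n \<omega> \<tau> ks j = comp_Psi n \<omega> \<tau> ls j"
  using strong f_proper assms unfolding strong_def by blast

text \<open>So every face \<open>g\<close> of the family carries a well-defined labelling of its facets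
  by the facets through \<open>f\<close>.\<close>
definition label :: "(nat \<Rightarrow> real) set \<Rightarrow> int \<Rightarrow> int" where
  "label g = comp_Psi n \<omega> \<tau> (SOME ks. valid n \<tau> f ks \<and> comp_tau \<tau> ks ` f = g)"

lemma label_eq:
  assumes "valid n \<tau> f ks" "i \<in> Xi n f"
  shows "label (comp_tau \<tau> ks ` f) i = comp_Psi n \<omega> \<tau> ks i"
proof -
  define ls where "ls = (SOME ls. valid n \<tau> f ls \<and> comp_tau \<tau> ls ` f = comp_tau \<tau> ks ` f)"
  have "valid n \<tau> f ls \<and> comp_tau \<tau> ls ` f = comp_tau \<tau> ks ` f"
    unfolding ls_def by (rule someI_ex) (use assms(1) in blast)
  then show ?thesis
    using transport_unique[of ls ks i] assms by (simp add: label_def ls_def[symmetric])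
qed

lemma label_bij: "g \<in> family \<Longrightarrow> bij_betw (label g) (Xi n f) (Xi n g)"
proof -
  assume "g \<in> family"
  then obtain ks where ks: "valid n \<tau> f ks" and g: "g = comp_tau \<tau> ks ` f"
    by (rule familyE)
  have "bij_betw (comp_Psi n \<omega> \<tau> ks) (Xi n f) (Xi n g)"
    using valid_composition(2)[OF f_proper ks] g by simp
  moreover have "label g i = comp_Psi n \<omega> \<tau> ks i" if "i \<in> Xi n f" for i
    using label_eq[OF ks that] g by simp
  ultimately show ?thesis using bij_betw_cong[of "Xi n f" "label g"] by simp
qed

definition move :: "int \<Rightarrow> (nat \<Rightarrow> real) set \<Rightarrow> (nat \<Rightarrow> real) set" where
  "move i g = \<tau> (label g i) ` g"

lemma move_extends:
  assumes g: "g \<in> family" and i: "i \<in> Xi n f"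
  obtains ks where "valid n \<tau> f ks" "g = comp_tau \<tau> ks ` f"
    "valid n \<tau> f (ks @ [label g i])" "move i g = comp_tau \<tau> (ks @ [label g i]) ` f"
proof -
  obtain ks where ks: "valid n \<tau> f ks" and gks: "g = comp_tau \<tau> ks ` f"
    using g by (rule familyE)
  have "label g i \<in> Xi n g" using label_bij[OF g] i by (auto simp: bij_betw_def)
  then have "valid n \<tau> f (ks @ [label g i])" using ks gks valid_snoc by (auto simp: Xi_def)
  then show ?thesis using that ks gks by (simp add: move_def comp_tau_snoc)
qed

lemma move_family: "g \<in> family \<Longrightarrow> i \<in> Xi n f \<Longrightarrow> move i g \<in> family"
  by (metis familyI move_extends)

lemma label_move:
  assumes g: "g \<in> family" and i: "i \<in> Xi n f" and l: "l \<in> Xi n f"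
  shows "label (move i g) l = Psi n \<omega> \<tau> (label g i) (label g l)"
proof -
  obtain ks where ks: "valid n \<tau> f ks" "g = comp_tau \<tau> ks ` f"
    and ks': "valid n \<tau> f (ks @ [label g i])" "move i g = comp_tau \<tau> (ks @ [label g i]) ` f"
    using move_extends[OF g i] .
  show ?thesis using label_eq[OF ks'(1) l] label_eq[OF ks(1) l] ks(2) ks'(2)
    by (simp add: comp_Psi_snoc)
qed

lemma move_involution:
  assumes g: "g \<in> family" and i: "i \<in> Xi n f"
  shows "move i (move i g) = g"
proof -
  have "label g i \<in> Xi n g" using label_bij[OF g] i by (auto simp: bij_betw_def)
  then have k: "label g i \<in> pm n" and gk: "g \<subseteq> facet n (label g i)" by (auto simp: Xi_def)
  have "label (move i g) i = \<omega> (label g i)" using label_move[OF g i i] by (simp add: Psi_def)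
  then show ?thesis using tau_back[OF k gk] by (simp add: move_def)
qed

text \<open>Two different moves commute: this is the compatibility of the pairing maps
  around the ridge spanned by the two facets involved.\<close>
lemma move_commute:
  assumes g: "g \<in> family" and i: "i \<in> Xi n f" and l: "l \<in> Xi n f"
  shows "move i (move l g) = move l (move i g)"
proof (cases "i = l")
  case False
  define k j where "k = label g i" and "j = label g l"
  have kX: "k \<in> Xi n g" and jX: "j \<in> Xi n g" and "j \<noteq> k"
    using label_bij[OF g] i l False by (auto simp: k_def j_def bij_betw_def inj_on_def)
  then have jk: "\<bar>j\<bar> \<noteq> \<bar>k\<bar>" using Xi_distinct_abs[OF proper_face_nonempty[OF family_proper[OF g]]]
    by blast
  have "g \<subseteq> face n {j, k}" using kX jX by (auto simp: Xi_def face_pair)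
  then have "\<tau> (Psi n \<omega> \<tau> j k) (\<tau> j p) = \<tau> (Psi n \<omega> \<tau> k j) (\<tau> k p)" if "p \<in> g" for p
    using tau_commute_ridge[OF _ _ jk] kX jX that by (auto simp: Xi_def)
  moreover have "move i (move l g) = (\<lambda>p. \<tau> (Psi n \<omega> \<tau> j k) (\<tau> j p)) ` g"
    using label_move[OF g l i] by (simp add: move_def image_image k_def j_def)
  moreover have "move l (move i g) = (\<lambda>p. \<tau> (Psi n \<omega> \<tau> k j) (\<tau> k p)) ` g"
    using label_move[OF g i l] by (simp add: move_def image_image k_def j_def)
  ultimately show ?thesis by (simp cong: image_cong)
qed simp

sublocale moves: commuting_involutions family "Xi n f" move
  using move_family move_involution move_commute by unfold_locales

text \<open>The face family is the orbit of \<open>f\<close> under the moves: a valid composition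
  applies at each step the pairing map of some facet, which is a move.\<close>
lemma family_eq_orbit: "family = moves.orbit (Xi n f) f"
proof
  show "moves.orbit (Xi n f) f \<subseteq> family" using moves.orbit_subset[OF f_in_family] by blast
  have "valid n \<tau> f ks \<Longrightarrow> comp_tau \<tau> ks ` f \<in> moves.orbit (Xi n f) f" for ks
  proof (induction ks rule: rev_induct)
    case Nil
    then show ?case by (simp add: moves.orbit.base)
  next
    case (snoc k ks)
    define g where "g = comp_tau \<tau> ks ` f"
    have ks: "valid n \<tau> f ks" and "k \<in> Xi n g"
      using snoc.prems valid_snoc by (auto simp: g_def Xi_def)
    moreover have "g \<in> family" using familyI[OF ks] by (simp add: g_def)
    ultimately obtain i where i: "i \<in> Xi n f" and "k = label g i"
      using label_bij by (metis bij_betw_iff_bijections)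
    then have "comp_tau \<tau> (ks @ [k]) ` f = move i g" by (simp add: comp_tau_snoc move_def g_def)
    then show ?case using moves.orbit.step[OF snoc.IH[OF ks] i] by (simp add: g_def)
  qed
  then show "family \<subseteq> moves.orbit (Xi n f) f" by (metis familyE subsetI)
qed

theorem card_family_power_of_two: "\<exists>m. card family = 2 ^ m"
  using moves.card_orbit_power_of_two[OF finite_family f_in_family finite_Xi subset_refl]
  by (simp add: family_eq_orbit[symmetric])

end

theorem mainTheorem6:
  fixes n :: nat and \<omega> :: "int \<Rightarrow> int"
    and \<tau> :: "int \<Rightarrow> (nat \<Rightarrow> real) \<Rightarrow> (nat \<Rightarrow> real)"
    and f :: "(nat \<Rightarrow> real) set"
  assumes "facets_pairing n \<omega> \<tau>" and "regular n \<omega> \<tau>" and "strong n \<omega> \<tau>"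
    and "f \<in> proper_faces n"
  shows "\<exists>m. card (face_family n \<tau> f) = 2 ^ m"
proof -
  interpret strong_pairing_face n \<omega> \<tau> f
    using assms(1,3,4) by unfold_locales
  show ?thesis by (rule card_family_power_of_two)
qed

end
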